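(* Let $n$ be an odd positive integer and $(\lambda\mid\mu)$ a bipartition of $n$. Then \[\Gamma^B_{(\lambda\mid\mu)}=\begin{cases}2\,\Gamma^D_{(\lambda\mid\mu)} & \ell(\mu)\text{ even},\\ 0 & \ell(\mu)\text{ odd}.\end{cases}\] Consequently $s_n^B=2s_n^D$.
   Context: $B_n$ is the group of permutations $w$ of $\{\pm1,\dots,\pm n\}$ with $w(-i)=-w(i)$, and $D_n=\{w\in B_n:w(1)\cdots w(n)>0\}$. Each $w\in B_n$ decomposes uniquely into positive cycles $(a_1,\dots,a_\ell)(-a_1,\dots,-a_\ell)$ and negative cycles $(b_1,\dots,b_\ell,-b_1,\dots,-b_\ell)$; its cycle type is the bipartition $(\lambda\mid\mu)$ of positive and negative cycle lengths, and conjugacy classes of $B_n$ are indexed by bipartitions of $n$. An element lies in $D_n$ iff $\ell(\mu)$ (the number of parts of $\mu$) is even; for $n$ odd, the $B_n$-class of each such $(\lambda\mid\mu)$ is a single $D_n$-conjugacy class. $\Gamma^B_{(\lambda\mid\mu)}$ (resp. $\Gamma^D_{(\lambda\mid\mu)}$) is the sum of the column of the complex character table of $B_n$ (resp. $D_n$) at the class of cycle type $(\lambda\mid\mu)$; $s_n^B$, $s_n^D$ are the sums of all entries of the character tables of $B_n$, $D_n$. *)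

theory Defs
  imports "Jordan_Normal_Form.Matrix" "HOL-Combinatorics.Permutations"
begin

text \<open>Elements of B_n: permutations w of {+-1,...,+-n} with w(-i) = -w(i),
  extended by the identity outside (so they are bijections of int).
  The group law is composition.\<close>

definition signed_perms :: "nat \<Rightarrow> (int \<Rightarrow> int) set" where
  "signed_perms n = {w. w permutes ({- int n .. int n} - {0}) \<and> (\<forall>i. w (- i) = - w i)}"

definition even_signed_perms :: "nat \<Rightarrow> (int \<Rightarrow> int) set" where
  "even_signed_perms n = {w \<in> signed_perms n. (\<Prod>i\<in>{1 .. int n}. w i) > 0}"

definition orbit_of :: "(int \<Rightarrow> int) \<Rightarrow> int \<Rightarrow> int set" where
  "orbit_of w x = {(w ^^ k) x | k. True}"

text \<open>A negative cycle is a cycle (orbit) of w on {+-1,...,+-n} that is closed under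
  negation; the number of such cycles is the number of parts of mu.\<close>
definition num_neg_cycles :: "nat \<Rightarrow> (int \<Rightarrow> int) \<Rightarrow> nat" where
  "num_neg_cycles n w = card {orbit_of w x | x. x \<in> {- int n .. int n} - {0} \<and> - x \<in> orbit_of w x}"

definition mat_trace :: "complex mat \<Rightarrow> complex" where
  "mat_trace A = (\<Sum>i<dim_row A. A $$ (i, i))"

definition is_rep :: "(int \<Rightarrow> int) set \<Rightarrow> nat \<Rightarrow> ((int \<Rightarrow> int) \<Rightarrow> complex mat) \<Rightarrow> bool" where
  "is_rep G d \<rho> \<longleftrightarrow> (\<forall>g\<in>G. \<rho> g \<in> carrier_mat d d) \<and>
     (\<forall>g\<in>G. \<forall>h\<in>G. \<rho> (g \<circ> h) = \<rho> g * \<rho> h) \<and> \<rho> id = 1\<^sub>m d"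

definition inv_subspace :: "(int \<Rightarrow> int) set \<Rightarrow> nat \<Rightarrow> ((int \<Rightarrow> int) \<Rightarrow> complex mat) \<Rightarrow> complex vec set \<Rightarrow> bool" where
  "inv_subspace G d \<rho> W \<longleftrightarrow> W \<subseteq> carrier_vec d \<and> 0\<^sub>v d \<in> W \<and>
     (\<forall>u\<in>W. \<forall>v\<in>W. u + v \<in> W) \<and> (\<forall>c. \<forall>v\<in>W. c \<cdot>\<^sub>v v \<in> W) \<and>
     (\<forall>g\<in>G. \<forall>v\<in>W. \<rho> g *\<^sub>v v \<in> W)"

definition irreducible_rep :: "(int \<Rightarrow> int) set \<Rightarrow> nat \<Rightarrow> ((int \<Rightarrow> int) \<Rightarrow> complex mat) \<Rightarrow> bool" where
  "irreducible_rep G d \<rho> \<longleftrightarrow> d > 0 \<and> is_rep G d \<rho> \<and>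
     (\<forall>W. inv_subspace G d \<rho> W \<longrightarrow> W = {0\<^sub>v d} \<or> W = carrier_vec d)"

definition irr_chars :: "(int \<Rightarrow> int) set \<Rightarrow> ((int \<Rightarrow> int) \<Rightarrow> complex) set" where
  "irr_chars G = {(\<lambda>g. if g \<in> G then mat_trace (\<rho> g) else 0) | d \<rho>. irreducible_rep G d \<rho>}"

definition col_sum :: "(int \<Rightarrow> int) set \<Rightarrow> (int \<Rightarrow> int) \<Rightarrow> complex" where
  "col_sum G g = (\<Sum>\<chi>\<in>irr_chars G. \<chi> g)"

definition conj_classes :: "(int \<Rightarrow> int) set \<Rightarrow> (int \<Rightarrow> int) set set" where
  "conj_classes G = {{h \<circ> g \<circ> Hilbert_Choice.inv h | h. h \<in> G} | g. g \<in> G}"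

definition table_sum :: "(int \<Rightarrow> int) set \<Rightarrow> complex" where
  "table_sum G = (\<Sum>C\<in>conj_classes G. col_sum G (SOME g. g \<in> C))"

end

(* For odd n the element -1 of B_n is central and lies outside D_n, so B_n = D_n x {1, -1}.
   By Schur's lemma -1 acts as a scalar e = +-1 in every irreducible representation of B_n;
   hence restriction to D_n stays irreducible, and the irreducible characters of B_n are exactly
   the characters chi of D_n twisted by e on the coset of -1. Summing over e doubles the column
   sums on D_n and cancels them off D_n. Conjugation by -1 is trivial, so the B_n-classes inside
   D_n are D_n-classes, which gives s_n^B = 2 s_n^D. Finally, w lies in D_n iff w has an even
   number of negative cycles, by induction on n: deleting the pair +-n from the cycles of w
   yields a signed permutation w' of {+-1, ..., +-(n-1)} with w(1)...w(n) = -n w'(1)...w'(n-1)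
   if {n, -n} is a negative cycle of w, and = n w'(1)...w'(n-1) otherwise. *)

theory Submission
  imports Defs "HOL-Combinatorics.Orbits"
begin

section \<open>Deleting a set from the cycles of a permutation\<close>

lemma orbit_of_eq_orbit: "permutation f \<Longrightarrow> orbit_of f x = orbit f x"
  by (simp add: orbit_of_def orbit_altdef_permutation)

lemma orbit_uminus:
  assumes "\<And>i. f (- i) = - f i"
  shows "orbit f (- x) = uminus ` orbit f x"
proof -
  have "(f ^^ k) (- x) = - (f ^^ k) x" for k by (induct k) (use assms in auto)
  then show ?thesis unfolding orbit_altdef by (auto simp: image_iff)
qed

definition shortcut :: "'a set \<Rightarrow> ('a \<Rightarrow> 'a) \<Rightarrow> 'a \<Rightarrow> 'a" where
  "shortcut M f x = (if x \<in> M then x else if f x \<in> M then f (f x) else f x)"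

text \<open>Every cycle of \<open>f\<close> either lies in \<open>M\<close> or meets \<open>M\<close> only in isolated points, so
  jumping over \<open>M\<close> deletes \<open>M\<close> from the cycles of \<open>f\<close>.\<close>
locale shortcut_perm =
  fixes f :: "'a \<Rightarrow> 'a" and S M :: "'a set"
  assumes permutes: "f permutes S" and finite: "finite S" and subset: "M \<subseteq> S"
    and leave: "\<And>x. x \<notin> M \<Longrightarrow> f x \<in> M \<Longrightarrow> f (f x) \<notin> M"
    and stay: "\<And>x. x \<in> M \<Longrightarrow> f x \<in> M \<Longrightarrow> f (f x) \<in> M"
begin

lemma shortcut_in: "x \<in> S - M \<Longrightarrow> shortcut M f x \<in> S - M"
  using leave[of x] permutes_in_image[OF permutes] unfolding shortcut_def by auto

lemma inj_on_shortcut: "inj_on (shortcut M f) (S - M)"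
proof (rule inj_onI)
  fix x y assume "x \<in> S - M" "y \<in> S - M" "shortcut M f x = shortcut M f y"
  with permutes_inj[OF permutes] show "x = y"
    unfolding shortcut_def by (auto split: if_splits dest: injD)
qed

lemma shortcut_permutes: "shortcut M f permutes (S - M)"
proof (rule bij_imp_permutes)
  have "shortcut M f ` (S - M) = S - M"
    using endo_inj_surj[OF _ _ inj_on_shortcut] shortcut_in finite by blast
  then show "bij_betw (shortcut M f) (S - M) (S - M)"
    using inj_on_shortcut unfolding bij_betw_def by blast
next
  show "x \<notin> S - M \<Longrightarrow> shortcut M f x = x" for x
    using permutes_not_in[OF permutes, of x] subset unfolding shortcut_def by auto
qed

lemma orbit_shortcut:
  assumes x: "x \<notin> M"
  shows "orbit (shortcut M f) x = orbit f x - M"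
proof
  show "orbit (shortcut M f) x \<subseteq> orbit f x - M"
  proof
    fix y assume "y \<in> orbit (shortcut M f) x"
    then show "y \<in> orbit f x - M"
    proof induct
      case base
      then show ?case using x leave[of x] unfolding shortcut_def by (auto intro: orbit_eqI)
    next
      case (step y)
      then show ?case using leave[of y] unfolding shortcut_def by (auto intro: orbit_eqI)
    qed
  qed
  \<comment> \<open>The second conjunct covers the points reached by a jump over \<open>M\<close>.\<close>
  have "(y \<notin> M \<longrightarrow> y \<in> orbit (shortcut M f) x) \<and>
        (y \<in> M \<longrightarrow> f y \<notin> M \<longrightarrow> f y \<in> orbit (shortcut M f) x)" if "y \<in> orbit f x" for y
    using that
  proof induct
    case base
    then show ?case using x unfolding shortcut_def by (auto intro: orbit_eqI)
  next
    case (step y)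
    show ?case
    proof (cases "y \<in> M")
      case True
      then show ?thesis using step stay[of y] by blast
    next
      case False
      then have "y \<in> orbit (shortcut M f) x" using step by blast
      then have "shortcut M f y \<in> orbit (shortcut M f) x" by (rule orbit_eqI(2)[OF refl])
      then show ?thesis using False unfolding shortcut_def by (auto split: if_splits)
    qed
  qed
  then show "orbit f x - M \<subseteq> orbit (shortcut M f) x" by blast
qed

end

section \<open>Signed permutations\<close>

abbreviation signed_points :: "nat \<Rightarrow> int set" where
  "signed_points n \<equiv> {- int n .. int n} - {0}"

definition neg_id :: "nat \<Rightarrow> int \<Rightarrow> int" where
  "neg_id n i = (if i \<in> signed_points n then - i else i)"

definition sign_prod :: "nat \<Rightarrow> (int \<Rightarrow> int) \<Rightarrow> int" where
  "sign_prod n w = (\<Prod>i\<in>{1 .. int n}. w i)"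

lemma signed_perms_iff:
  "w \<in> signed_perms n \<longleftrightarrow> w permutes signed_points n \<and> (\<forall>i. w (- i) = - w i)"
  by (simp add: signed_perms_def)

lemma signed_perms_permutes: "w \<in> signed_perms n \<Longrightarrow> w permutes signed_points n"
  by (simp add: signed_perms_iff)

lemma signed_perms_uminus: "w \<in> signed_perms n \<Longrightarrow> w (- i) = - w i"
  by (simp add: signed_perms_iff)

lemma signed_permsI: "w permutes signed_points n \<Longrightarrow> (\<And>i. w (- i) = - w i) \<Longrightarrow> w \<in> signed_perms n"
  by (simp add: signed_perms_iff)

lemma signed_perms_in: "w \<in> signed_perms n \<Longrightarrow> i \<in> signed_points n \<Longrightarrow> w i \<in> signed_points n"
  using permutes_in_image[OF signed_perms_permutes] by blast

lemma signed_perms_bij: "w \<in> signed_perms n \<Longrightarrow> bij w"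
  using signed_perms_permutes permutes_bij by blast

lemma finite_signed_perms: "finite (signed_perms n)"
  by (rule finite_subset[OF _ finite_permutations[of "signed_points n"]])
    (auto dest: signed_perms_permutes)

lemma comp_signed_perms: "g \<in> signed_perms n \<Longrightarrow> h \<in> signed_perms n \<Longrightarrow> g \<circ> h \<in> signed_perms n"
  by (simp add: signed_perms_iff permutes_compose)

lemma inv_signed_perms:
  assumes h: "h \<in> signed_perms n"
  shows "Hilbert_Choice.inv h \<in> signed_perms n"
proof (rule signed_permsI)
  have p: "h permutes signed_points n" using signed_perms_permutes[OF h] .
  then show "Hilbert_Choice.inv h permutes signed_points n" by (rule permutes_inv)
  fix i
  have "h (- Hilbert_Choice.inv h i) = - i"
    using signed_perms_uminus[OF h] permutes_inverses(1)[OF p] by simp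
  then show "Hilbert_Choice.inv h (- i) = - Hilbert_Choice.inv h i"
    using permutes_inverses(2)[OF p] by metis
qed

lemma neg_id_signed_perms: "neg_id n \<in> signed_perms n"
proof (rule signed_permsI)
  show "neg_id n permutes signed_points n"
    by (rule bij_imp_permutes, rule bij_betw_byWitness[where f'="neg_id n"])
      (auto simp: neg_id_def)
qed (auto simp: neg_id_def)

lemma neg_id_neg_id: "neg_id n \<circ> neg_id n = id"
  by (auto simp: neg_id_def fun_eq_iff)

lemma neg_id_commute:
  assumes w: "w \<in> signed_perms n"
  shows "neg_id n \<circ> w = w \<circ> neg_id n"
proof
  fix i
  show "(neg_id n \<circ> w) i = (w \<circ> neg_id n) i"
  proof (cases "i \<in> signed_points n")
    case True
    then show ?thesis using signed_perms_in[OF w True] signed_perms_uminus[OF w]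
      by (simp add: neg_id_def)
  next
    case False
    then show ?thesis using permutes_not_in[OF signed_perms_permutes[OF w] False]
      by (auto simp: neg_id_def)
  qed
qed

lemma sign_prod_nonzero: "w \<in> signed_perms n \<Longrightarrow> sign_prod n w \<noteq> 0"
  using signed_perms_in[of w n] by (fastforce simp: sign_prod_def)

lemma bij_betw_abs_signed_perm:
  assumes h: "h \<in> signed_perms n"
  shows "bij_betw (\<lambda>i. \<bar>h i\<bar>) {1 .. int n} {1 .. int n}"
proof -
  have inj: "inj_on (\<lambda>i. \<bar>h i\<bar>) {1 .. int n}"
  proof (rule inj_onI)
    fix i j assume ij: "i \<in> {1 .. int n}" "j \<in> {1 .. int n}" and "\<bar>h i\<bar> = \<bar>h j\<bar>"
    then have "h i = h j \<or> h i = - h j" by arith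
    then have "h i = h j \<or> h i = h (- j)" using signed_perms_uminus[OF h] by simp
    then have "i = j \<or> i = - j"
      using bij_is_inj[OF signed_perms_bij[OF h]] by (auto dest: injD)
    then show "i = j" using ij by auto
  qed
  have "\<bar>h i\<bar> \<in> {1 .. int n}" if "i \<in> {1 .. int n}" for i
    using signed_perms_in[OF h, of i] that by auto
  then have "(\<lambda>i. \<bar>h i\<bar>) ` {1 .. int n} \<subseteq> {1 .. int n}" by blast
  then have "(\<lambda>i. \<bar>h i\<bar>) ` {1 .. int n} = {1 .. int n}"
    using endo_inj_surj[OF _ _ inj] by simp
  then show ?thesis using inj unfolding bij_betw_def by blast
qed

lemma sign_prod_comp:
  assumes g: "g \<in> signed_perms n" and h: "h \<in> signed_perms n"
  shows "sign_prod n (g \<circ> h) * (\<Prod>i\<in>{1 .. int n}. i) = sign_prod n g * sign_prod n h"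
proof -
  let ?s = "\<Prod>i\<in>{1 .. int n}. sgn (h i)"
  have "g (h i) = sgn (h i) * g \<bar>h i\<bar>" if "i \<in> {1 .. int n}" for i
    using signed_perms_in[OF h, of i] that signed_perms_uminus[OF g, of "\<bar>h i\<bar>"]
    by (auto simp: sgn_if abs_if)
  then have "sign_prod n (g \<circ> h) = ?s * (\<Prod>i\<in>{1 .. int n}. g \<bar>h i\<bar>)"
    unfolding sign_prod_def by (simp add: prod.distrib)
  also have "(\<Prod>i\<in>{1 .. int n}. g \<bar>h i\<bar>) = sign_prod n g"
    unfolding sign_prod_def using prod.reindex_bij_betw[OF bij_betw_abs_signed_perm[OF h]] .
  finally have gh: "sign_prod n (g \<circ> h) = ?s * sign_prod n g" .
  have "sign_prod n h = ?s * (\<Prod>i\<in>{1 .. int n}. \<bar>h i\<bar>)"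
    unfolding sign_prod_def by (simp add: prod.distrib[symmetric] sgn_mult_abs)
  also have "(\<Prod>i\<in>{1 .. int n}. \<bar>h i\<bar>) = (\<Prod>i\<in>{1 .. int n}. i)"
    using prod.reindex_bij_betw[OF bij_betw_abs_signed_perm[OF h], of id] by simp
  finally show ?thesis using gh by (simp add: ac_simps)
qed

lemma even_signed_perms_iff: "w \<in> even_signed_perms n \<longleftrightarrow> w \<in> signed_perms n \<and> sign_prod n w > 0"
  by (simp add: even_signed_perms_def sign_prod_def)

lemma even_signed_perms_subset: "even_signed_perms n \<subseteq> signed_perms n"
  by (auto simp: even_signed_perms_iff)

lemma comp_even_signed_perms_iff:
  assumes g: "g \<in> signed_perms n" and h: "h \<in> signed_perms n"
  shows "g \<circ> h \<in> even_signed_perms n \<longleftrightarrow> (g \<in> even_signed_perms n \<longleftrightarrow> h \<in> even_signed_perms n)"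
proof -
  have "(\<Prod>i\<in>{1 .. int n}. i) > 0" by (rule prod_pos) auto
  then have "sign_prod n (g \<circ> h) > 0 \<longleftrightarrow> sign_prod n g * sign_prod n h > 0"
    by (simp flip: sign_prod_comp[OF g h] add: zero_less_mult_iff)
  then show ?thesis
    using sign_prod_nonzero[OF g] sign_prod_nonzero[OF h] comp_signed_perms[OF g h] g h
    by (auto simp: even_signed_perms_iff zero_less_mult_iff)
qed

lemma neg_id_not_even_signed_perms:
  assumes "odd n"
  shows "neg_id n \<notin> even_signed_perms n"
proof -
  have "sign_prod n (neg_id n) = (\<Prod>i\<in>{1 .. int n}. - i)"
    unfolding sign_prod_def by (intro prod.cong) (auto simp: neg_id_def)
  also have "\<dots> = - (\<Prod>i\<in>{1 .. int n}. i)"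
    using assms by (simp add: prod_uminus)
  finally show ?thesis
    using prod_pos[of "{1 .. int n}" id] by (simp add: even_signed_perms_iff)
qed

section \<open>Negative cycles and the sign of \<open>w(1) \<cdots> w(n)\<close>\<close>

definition neg_orbits :: "('a::uminus \<Rightarrow> 'a) \<Rightarrow> 'a set \<Rightarrow> 'a set set" where
  "neg_orbits w S = {orbit w x | x. x \<in> S \<and> - x \<in> orbit w x}"

lemma signed_perms_permutation: "w \<in> signed_perms n \<Longrightarrow> permutation w"
  using permutation_permutes signed_perms_permutes by blast

lemma num_neg_cycles_eq_card:
  "w \<in> signed_perms n \<Longrightarrow> num_neg_cycles n w = card (neg_orbits w (signed_points n))"
  by (simp add: num_neg_cycles_def neg_orbits_def orbit_of_eq_orbit signed_perms_permutation)

lemma signed_perm_orbit_eq: "w \<in> signed_perms n \<Longrightarrow> y \<in> orbit w x \<Longrightarrow> orbit w y = orbit w x"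
  using orbit_cyclic_eq3 cyclic_on_orbit' signed_perms_permutation by metis

lemma neg_orbits_uminus:
  assumes w: "w \<in> signed_perms n" and X: "X \<in> neg_orbits w S" and y: "y \<in> X"
  shows "- y \<in> X"
proof -
  obtain x where x: "X = orbit w x" "- x \<in> orbit w x" using X unfolding neg_orbits_def by blast
  then have "uminus ` X = X"
    using orbit_uminus[of w, OF signed_perms_uminus[OF w]] signed_perm_orbit_eq[OF w] by metis
  then show ?thesis using y by blast
qed

context
  fixes n :: nat and w :: "int \<Rightarrow> int" and m :: int and M :: "int set"
  assumes w: "w \<in> signed_perms (Suc n)"
  defines "m \<equiv> int (Suc n)" and "M \<equiv> {m, - m}"
begin

private lemma signed_points_Suc: "signed_points (Suc n) - M = signed_points n"
  by (auto simp: M_def m_def)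

private lemma w_inj: "w x = w y \<longleftrightarrow> x = y"
  using bij_is_inj[OF signed_perms_bij[OF w]] by (simp add: inj_eq)

private lemma w_preimage_M: "w x \<in> M \<Longrightarrow> w y \<in> M \<Longrightarrow> x = y \<or> x = - y"
proof -
  assume "w x \<in> M" "w y \<in> M"
  then have "w x = w y \<or> w x = w (- y)"
    using signed_perms_uminus[OF w, of y] by (auto simp: M_def)
  then show ?thesis using w_inj by blast
qed

interpretation shortcut_perm w "signed_points (Suc n)" M
proof
  show "w permutes signed_points (Suc n)" by (rule signed_perms_permutes[OF w])
  show "M \<subseteq> signed_points (Suc n)" by (auto simp: M_def m_def)
  fix x
  show "x \<notin> M \<Longrightarrow> w x \<in> M \<Longrightarrow> w (w x) \<notin> M"
    using w_preimage_M[of x "w x"] by (auto simp: M_def)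
  show "x \<in> M \<Longrightarrow> w x \<in> M \<Longrightarrow> w (w x) \<in> M"
    using signed_perms_uminus[OF w, of x] by (auto simp: M_def)
qed simp

lemma shortcut_signed_perms: "shortcut M w \<in> signed_perms n"
proof (rule signed_permsI)
  show "shortcut M w permutes signed_points n"
    using shortcut_permutes signed_points_Suc by simp
  have "- x \<in> M \<longleftrightarrow> x \<in> M" for x by (auto simp: M_def)
  then show "shortcut M w (- i) = - shortcut M w i" for i
    using signed_perms_uminus[OF w] by (simp add: shortcut_def)
qed

private lemma orbit_w_subset: "x \<in> signed_points (Suc n) \<Longrightarrow> orbit w x \<subseteq> signed_points (Suc n)"
  using permutes_orbit_subset[OF signed_perms_permutes[OF w]] .

private lemma neg_orbit_meets_outside:
  assumes X: "X \<in> neg_orbits w (signed_points (Suc n))" and "X \<noteq> M"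
  obtains y where "y \<in> X" "y \<notin> M"
proof -
  obtain x where x: "X = orbit w x" using X unfolding neg_orbits_def by blast
  then have "x \<in> X" using permutation_self_in_orbit[OF signed_perms_permutation[OF w]] by blast
  moreover have "- x \<in> X" using neg_orbits_uminus[OF w X] calculation .
  ultimately have "\<not> X \<subseteq> M" using \<open>X \<noteq> M\<close> by (auto simp: M_def)
  then show ?thesis using that by blast
qed

lemma neg_orbits_shortcut:
  "neg_orbits (shortcut M w) (signed_points n) =
     (\<lambda>X. X - M) ` (neg_orbits w (signed_points (Suc n)) - {M})"
proof (intro equalityI subsetI)
  fix P assume "P \<in> neg_orbits (shortcut M w) (signed_points n)"
  then obtain y where P: "P = orbit (shortcut M w) y"
    and y: "y \<in> signed_points n" and ny: "- y \<in> P"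
    unfolding neg_orbits_def by blast
  have yM: "y \<notin> M" using y signed_points_Suc by blast
  then have "P = orbit w y - M" using P orbit_shortcut by simp
  moreover have "orbit w y \<in> neg_orbits w (signed_points (Suc n))"
    using y ny \<open>P = orbit w y - M\<close> unfolding neg_orbits_def by auto
  moreover have "orbit w y \<noteq> M"
    using yM permutation_self_in_orbit[OF signed_perms_permutation[OF w]] by blast
  ultimately show "P \<in> (\<lambda>X. X - M) ` (neg_orbits w (signed_points (Suc n)) - {M})" by blast
next
  fix P assume "P \<in> (\<lambda>X. X - M) ` (neg_orbits w (signed_points (Suc n)) - {M})"
  then obtain X where P: "P = X - M" and X: "X \<in> neg_orbits w (signed_points (Suc n))"
    and "X \<noteq> M" by blast
  then obtain y where yX: "y \<in> X" and yM: "y \<notin> M" using neg_orbit_meets_outside by blast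
  obtain x where x: "X = orbit w x" "x \<in> signed_points (Suc n)"
    using X unfolding neg_orbits_def by blast
  have "y \<in> signed_points n" using yX yM x orbit_w_subset signed_points_Suc by blast
  moreover have "orbit (shortcut M w) y = P"
    using orbit_shortcut[OF yM] signed_perm_orbit_eq[OF w] yX x P by simp
  moreover have "- y \<in> P"
    using neg_orbits_uminus[OF w X yX] yM P by (auto simp: M_def)
  ultimately show "P \<in> neg_orbits (shortcut M w) (signed_points n)"
    unfolding neg_orbits_def by blast
qed

lemma inj_on_diff_neg_orbits: "inj_on (\<lambda>X. X - M) (neg_orbits w (signed_points (Suc n)) - {M})"
proof (rule inj_onI)
  fix X1 X2
  assume X1: "X1 \<in> neg_orbits w (signed_points (Suc n)) - {M}"
    and X2: "X2 \<in> neg_orbits w (signed_points (Suc n)) - {M}" and eq: "X1 - M = X2 - M"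
  obtain y where y: "y \<in> X1" "y \<notin> M" using neg_orbit_meets_outside X1 by blast
  have "X = orbit w y" if "X \<in> neg_orbits w (signed_points (Suc n))" "y \<in> X" for X
    using that signed_perm_orbit_eq[OF w] unfolding neg_orbits_def by blast
  then show "X1 = X2" using X1 X2 y eq by blast
qed

lemma M_in_neg_orbits_iff: "M \<in> neg_orbits w (signed_points (Suc n)) \<longleftrightarrow> w m = - m"
proof
  assume wm: "w m = - m"
  then have wnm: "w (- m) = m" using signed_perms_uminus[OF w, of m] by simp
  have "orbit w m \<subseteq> M"
  proof
    fix y assume "y \<in> orbit w m"
    then show "y \<in> M" by induct (use wm wnm in \<open>auto simp: M_def\<close>)
  qed
  moreover have "m \<in> orbit w m"
    using permutation_self_in_orbit[OF signed_perms_permutation[OF w]] .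
  moreover have "- m \<in> orbit w m" using wm orbit_eqI(1) by metis
  ultimately have "orbit w m = M" by (auto simp: M_def)
  moreover have "m \<in> signed_points (Suc n)" by (simp add: m_def)
  ultimately show "M \<in> neg_orbits w (signed_points (Suc n))"
    using \<open>- m \<in> orbit w m\<close> unfolding neg_orbits_def by blast
next
  assume "M \<in> neg_orbits w (signed_points (Suc n))"
  then obtain x where Mx: "M = orbit w x" unfolding neg_orbits_def by blast
  have x: "x \<in> M"
    using Mx permutation_self_in_orbit[OF signed_perms_permutation[OF w]] by blast
  have wx: "w x \<in> M" using Mx orbit.base by metis
  have "w x \<noteq> x"
    using orbit_eq_singleton_iff[of w x] Mx by (auto simp: M_def m_def)
  then have "w x = - x" using x wx by (auto simp: M_def)
  then show "w m = - m" using x signed_perms_uminus[OF w, of m] by (auto simp: M_def)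
qed

lemma num_neg_cycles_shortcut:
  "num_neg_cycles (Suc n) w = num_neg_cycles n (shortcut M w) + (if w m = - m then 1 else 0)"
proof -
  let ?N = "neg_orbits w (signed_points (Suc n))"
  have "finite ?N"
    by (rule finite_subset[of _ "Pow (signed_points (Suc n))"])
      (use orbit_w_subset in \<open>auto simp: neg_orbits_def\<close>)
  then have "card ?N = card (?N - {M}) + (if w m = - m then 1 else 0)"
    using M_in_neg_orbits_iff card_Suc_Diff1 by fastforce
  also have "card (?N - {M}) = num_neg_cycles n (shortcut M w)"
    using num_neg_cycles_eq_card[OF shortcut_signed_perms] neg_orbits_shortcut
      card_image[OF inj_on_diff_neg_orbits] by simp
  finally show ?thesis using num_neg_cycles_eq_card[OF w] by simp
qed

private lemma shortcut_w_pos: "i \<in> {1 .. int n} \<Longrightarrow> shortcut M w i = (if w i \<in> M then w (w i) else w i)"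
  by (auto simp: shortcut_def M_def m_def)

private lemma sign_prod_Suc: "sign_prod (Suc n) w = w m * (\<Prod>i\<in>{1 .. int n}. w i)"
proof -
  have "{1 .. int (Suc n)} = insert m {1 .. int n}" by (auto simp: m_def)
  then show ?thesis by (simp add: sign_prod_def m_def)
qed

private lemma preimage_M_pos:
  assumes "w m \<notin> M"
  obtains a where "a \<in> {1 .. int n}" "w a = m \<or> w a = - m"
proof -
  obtain y where y: "w y = m" using bij_is_surj[OF signed_perms_bij[OF w]] by (metis surjD)
  have "y \<in> signed_points (Suc n)"
  proof (rule ccontr)
    assume "y \<notin> signed_points (Suc n)"
    then have "w y = y" by (rule permutes_not_in[OF signed_perms_permutes[OF w]])
    then show False using y \<open>y \<notin> signed_points (Suc n)\<close> by (simp add: m_def)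
  qed
  moreover have "y \<notin> M"
    using assms y signed_perms_uminus[OF w, of m] by (auto simp: M_def)
  ultimately have "\<bar>y\<bar> \<in> {1 .. int n}" by (auto simp: M_def m_def)
  moreover have "w \<bar>y\<bar> = m \<or> w \<bar>y\<bar> = - m"
    using y signed_perms_uminus[OF w, of y] by (auto simp: abs_if)
  ultimately show ?thesis using that by blast
qed

text \<open>If \<open>w\<close> maps \<open>a\<close> to \<open>\<plusminus>m\<close>, the shortcut replaces the factors \<open>w m * w a\<close>
  by \<open>w (w a)\<close>, which differs from it by the factor \<open>m\<close>.\<close>
private lemma sign_prod_shortcut_moved:
  assumes "w m \<notin> M"
  shows "sign_prod (Suc n) w = m * sign_prod n (shortcut M w)"
proof -
  obtain a where a: "a \<in> {1 .. int n}" and wa: "w a = m \<or> w a = - m"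
    using preimage_M_pos[OF assms] .
  then have other: "w i \<notin> M" if "i \<in> {1 .. int n} - {a}" for i
    using that w_preimage_M[of i a] by (auto simp: M_def)
  define R where "R = (\<Prod>i\<in>{1 .. int n} - {a}. w i)"
  have "(\<Prod>i\<in>{1 .. int n}. w i) = w a * R"
    unfolding R_def using a by (simp add: prod.remove)
  moreover have "sign_prod n (shortcut M w) = shortcut M w a * R"
  proof -
    have "(\<Prod>i\<in>{1 .. int n} - {a}. shortcut M w i) = R"
      unfolding R_def using other by (intro prod.cong) (simp_all add: shortcut_w_pos)
    then show ?thesis unfolding sign_prod_def using a by (simp add: prod.remove)
  qed
  moreover have "shortcut M w a = w (w a)"
    using shortcut_w_pos[OF a] wa by (auto simp: M_def)
  moreover have "w m * w a = m * w (w a)"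
    using wa signed_perms_uminus[OF w, of m] by auto
  ultimately show ?thesis using sign_prod_Suc by (simp add: mult.assoc[symmetric])
qed

lemma sign_prod_shortcut:
  "sign_prod (Suc n) w = (if w m = - m then - m else m) * sign_prod n (shortcut M w)"
proof (cases "w m \<in> M")
  case True
  then have "w i \<notin> M" if "i \<in> {1 .. int n}" for i
    using that w_preimage_M[of i m] by (auto simp: M_def m_def)
  then have "sign_prod n (shortcut M w) = (\<Prod>i\<in>{1 .. int n}. w i)"
    unfolding sign_prod_def by (intro prod.cong) (simp_all add: shortcut_w_pos)
  moreover have "w m = m \<or> w m = - m" using True by (simp add: M_def)
  ultimately show ?thesis using sign_prod_Suc by (auto simp: m_def)
next
  case False
  moreover have "w m \<noteq> - m" using False by (simp add: M_def)
  ultimately show ?thesis using sign_prod_shortcut_moved by simp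
qed

end

theorem even_signed_perms_iff_even_num_neg_cycles:
  "w \<in> signed_perms n \<Longrightarrow> w \<in> even_signed_perms n \<longleftrightarrow> even (num_neg_cycles n w)"
proof (induction n arbitrary: w)
  case 0
  have "neg_orbits w (signed_points 0) = {}" by (auto simp: neg_orbits_def)
  then show ?case using 0 by (simp add: num_neg_cycles_eq_card even_signed_perms_iff sign_prod_def)
next
  case (Suc n)
  let ?q = "shortcut {int (Suc n), - int (Suc n)} w"
  have q: "?q \<in> signed_perms n" using shortcut_signed_perms[OF Suc.prems] .
  then have "sign_prod n ?q > 0 \<longleftrightarrow> even (num_neg_cycles n ?q)"
    using Suc.IH by (simp add: even_signed_perms_iff)
  then show ?case
    using Suc.prems sign_prod_nonzero[OF q] num_neg_cycles_shortcut[OF Suc.prems]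
      sign_prod_shortcut[OF Suc.prems]
    by (auto simp: even_signed_perms_iff zero_less_mult_iff)
qed

section \<open>Groups with a central involution outside an index-two subgroup\<close>

lemma smult_mat_mult_vec:
  assumes "A \<in> carrier_mat nr nc" "v \<in> carrier_vec nc"
  shows "(k \<cdot>\<^sub>m A) *\<^sub>v v = (k :: 'a :: comm_semiring_0) \<cdot>\<^sub>v (A *\<^sub>v v)"
  using assms by (intro eq_vecI) (auto simp: row_def scalar_prod_def sum_distrib_left ac_simps)

lemma smult_mult_smult_mat:
  assumes "A \<in> carrier_mat nr n" "B \<in> carrier_mat n nc"
  shows "(a \<cdot>\<^sub>m A) * (b \<cdot>\<^sub>m B) = (a * b :: 'a :: comm_semiring_0) \<cdot>\<^sub>m (A * B)"
  using assms by (intro eq_matI) (auto simp: scalar_prod_def sum_distrib_left ac_simps)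

lemma one_smult_mat: "(1 :: 'a :: semiring_1) \<cdot>\<^sub>m A = A"
  by (intro eq_matI) auto

lemma mat_eq_smult_one_matI:
  assumes A: "A \<in> carrier_mat d d" and Av: "\<And>v. v \<in> carrier_vec d \<Longrightarrow> A *\<^sub>v v = c \<cdot>\<^sub>v v"
  shows "A = (c :: 'a :: comm_ring_1) \<cdot>\<^sub>m 1\<^sub>m d"
proof (rule eq_matI)
  fix i j assume "i < dim_row (c \<cdot>\<^sub>m 1\<^sub>m d)" "j < dim_col (c \<cdot>\<^sub>m 1\<^sub>m d)"
  then have ij: "i < d" "j < d" by auto
  have "(A *\<^sub>v unit_vec d j) $ i = (c \<cdot>\<^sub>v unit_vec d j) $ i" using Av by simp
  then show "A $$ (i, j) = (c \<cdot>\<^sub>m 1\<^sub>m d) $$ (i, j)"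
    using A ij by (simp add: scalar_prod_right_unit)
qed (use A in auto)

lemma mat_trace_smult: "A \<in> carrier_mat d d \<Longrightarrow> mat_trace (c \<cdot>\<^sub>m A) = c * mat_trace A"
  by (simp add: mat_trace_def sum_distrib_left)

lemma mat_trace_one: "mat_trace (1\<^sub>m d) = of_nat d"
  by (simp add: mat_trace_def)

lemma is_rep_carrier: "is_rep G d r \<Longrightarrow> g \<in> G \<Longrightarrow> r g \<in> carrier_mat d d"
  and is_rep_comp: "is_rep G d r \<Longrightarrow> g \<in> G \<Longrightarrow> h \<in> G \<Longrightarrow> r (g \<circ> h) = r g * r h"
  and is_rep_id: "is_rep G d r \<Longrightarrow> r id = 1\<^sub>m d"
  by (simp_all add: is_rep_def)

lemma is_rep_subset: "is_rep G d r \<Longrightarrow> H \<subseteq> G \<Longrightarrow> is_rep H d r"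
  by (auto simp: is_rep_def)

lemma inv_subspace_restrict:
  assumes "inv_subspace G d r W" "H \<subseteq> G" "\<And>h. h \<in> H \<Longrightarrow> r' h = r h"
  shows "inv_subspace H d r' W"
  using assms by (auto simp: inv_subspace_def)

lemma inv_subspace_scalar_extend:
  assumes W: "inv_subspace H d r W" and r: "\<And>h. h \<in> H \<Longrightarrow> r h \<in> carrier_mat d d"
    and r': "\<And>g. g \<in> G \<Longrightarrow> \<exists>c h. h \<in> H \<and> r' g = c \<cdot>\<^sub>m r h"
  shows "inv_subspace G d r' W"
  unfolding inv_subspace_def
proof (intro conjI ballI)
  fix g v assume g: "g \<in> G" and v: "v \<in> W"
  obtain c h where h: "h \<in> H" and r'g: "r' g = c \<cdot>\<^sub>m r h" using r'[OF g] by blast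
  have "v \<in> carrier_vec d" using W v by (auto simp: inv_subspace_def)
  then have "r' g *\<^sub>v v = c \<cdot>\<^sub>v (r h *\<^sub>v v)" using r'g smult_mat_mult_vec[OF r[OF h]] by simp
  then show "r' g *\<^sub>v v \<in> W" using W h v by (simp add: inv_subspace_def)
qed (use W in \<open>auto simp: inv_subspace_def\<close>)

lemma inv_subspace_fixed_vectors:
  assumes rep: "is_rep G d r" and A: "A \<in> carrier_mat d d"
    and comm: "\<And>g. g \<in> G \<Longrightarrow> A * r g = r g * A"
  shows "inv_subspace G d r {v \<in> carrier_vec d. A *\<^sub>v v = v}"
  unfolding inv_subspace_def
proof (intro conjI ballI allI)
  fix g v assume g: "g \<in> G" and v: "v \<in> {v \<in> carrier_vec d. A *\<^sub>v v = v}"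
  have rg: "r g \<in> carrier_mat d d" using is_rep_carrier[OF rep g] .
  have "A *\<^sub>v (r g *\<^sub>v v) = (r g * A) *\<^sub>v v" using A rg v comm[OF g] by (simp flip: assoc_mult_mat_vec)
  also have "\<dots> = r g *\<^sub>v v" using A rg v by simp
  finally show "r g *\<^sub>v v \<in> {v \<in> carrier_vec d. A *\<^sub>v v = v}" using rg v by simp
qed (use A in \<open>auto simp: mult_add_distrib_mat_vec mult_mat_vec\<close>)

lemma irreducible_rep_central_involution:
  assumes irr: "irreducible_rep G d r" and z: "z \<in> G" and zz: "z \<circ> z = id"
    and central: "\<And>g. g \<in> G \<Longrightarrow> z \<circ> g = g \<circ> z"
  obtains e :: complex where "e = 1 \<or> e = -1" "r z = e \<cdot>\<^sub>m 1\<^sub>m d"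
proof -
  have rep: "is_rep G d r" using irr by (simp add: irreducible_rep_def)
  define A where "A = r z"
  have A: "A \<in> carrier_mat d d" unfolding A_def using is_rep_carrier[OF rep z] .
  have AA: "A * A = 1\<^sub>m d" unfolding A_def using is_rep_comp[OF rep z z] is_rep_id[OF rep] zz by metis
  have "A * r g = r g * A" if "g \<in> G" for g
    unfolding A_def using is_rep_comp[OF rep z that] is_rep_comp[OF rep that z] central[OF that] by metis
  then have "inv_subspace G d r {v \<in> carrier_vec d. A *\<^sub>v v = v}"
    by (rule inv_subspace_fixed_vectors[OF rep A])
  then consider "{v \<in> carrier_vec d. A *\<^sub>v v = v} = {0\<^sub>v d}"
    | "{v \<in> carrier_vec d. A *\<^sub>v v = v} = carrier_vec d"
    using irr unfolding irreducible_rep_def by blast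
  then show ?thesis
  proof cases
    case 1
    \<comment> \<open>As A * A = 1, the vector A v + v is fixed by A, hence zero.\<close>
    have "A *\<^sub>v v = (-1) \<cdot>\<^sub>v v" if v: "v \<in> carrier_vec d" for v
    proof -
      have Av: "A *\<^sub>v v \<in> carrier_vec d" using A v by simp
      have "A *\<^sub>v (A *\<^sub>v v) = v" using A v AA by (metis assoc_mult_mat_vec one_mult_mat_vec)
      then have "A *\<^sub>v (A *\<^sub>v v + v) = A *\<^sub>v v + v"
        using A v Av by (simp add: mult_add_distrib_mat_vec comm_add_vec[OF v Av])
      then have "A *\<^sub>v v + v \<in> {v \<in> carrier_vec d. A *\<^sub>v v = v}" using v Av by simp
      then have zero: "A *\<^sub>v v + v = 0\<^sub>v d" unfolding 1 by simp
      show ?thesis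
      proof (rule eq_vecI)
        fix i assume "i < dim_vec ((-1) \<cdot>\<^sub>v v)"
        then have i: "i < d" using v by simp
        have "(A *\<^sub>v v) $ i + v $ i = 0" using arg_cong[OF zero, of "\<lambda>u. u $ i"] i v Av by simp
        then show "(A *\<^sub>v v) $ i = ((-1) \<cdot>\<^sub>v v) $ i" using i v by (simp add: add_eq_0_iff2)
      qed (use A v in simp)
    qed
    then show ?thesis using that mat_eq_smult_one_matI[OF A] unfolding A_def by blast
  next
    case 2
    then have "A *\<^sub>v v = 1 \<cdot>\<^sub>v v" if "v \<in> carrier_vec d" for v using that by auto
    then show ?thesis using that mat_eq_smult_one_matI[OF A] unfolding A_def by blast
  qed
qed

definition character :: "(int \<Rightarrow> int) set \<Rightarrow> ((int \<Rightarrow> int) \<Rightarrow> complex mat) \<Rightarrow> (int \<Rightarrow> int) \<Rightarrow> complex" where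
  "character G r g = (if g \<in> G then mat_trace (r g) else 0)"

lemma irr_chars_character: "irr_chars G = {character G r | d r. irreducible_rep G d r}"
  by (simp add: irr_chars_def character_def[abs_def])

lemma irr_chars_outside: "\<chi> \<in> irr_chars G \<Longrightarrow> g \<notin> G \<Longrightarrow> \<chi> g = 0"
  by (auto simp: irr_chars_character character_def)

lemma irr_chars_id_nonzero:
  assumes "\<chi> \<in> irr_chars G" "id \<in> G"
  shows "\<chi> id \<noteq> 0"
  using assms by (auto simp: irr_chars_character character_def irreducible_rep_def is_rep_def mat_trace_one)

lemma col_sum_outside: "g \<notin> G \<Longrightarrow> col_sum G g = 0"
  by (simp add: col_sum_def irr_chars_outside)

definition conj_class :: "(int \<Rightarrow> int) set \<Rightarrow> (int \<Rightarrow> int) \<Rightarrow> (int \<Rightarrow> int) set" where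
  "conj_class G g = {h \<circ> g \<circ> Hilbert_Choice.inv h | h. h \<in> G}"

lemma conj_classes_eq_image: "conj_classes G = conj_class G ` G"
  by (auto simp: conj_classes_def conj_class_def)

locale central_involution_split =
  fixes G H :: "(int \<Rightarrow> int) set" and z :: "int \<Rightarrow> int"
  assumes subset: "H \<subseteq> G"
    and comp_closed: "g \<in> G \<Longrightarrow> h \<in> G \<Longrightarrow> g \<circ> h \<in> G"
    and comp_in_H_iff: "g \<in> G \<Longrightarrow> h \<in> G \<Longrightarrow> g \<circ> h \<in> H \<longleftrightarrow> (g \<in> H \<longleftrightarrow> h \<in> H)"
    and z_in: "z \<in> G" and z_notin: "z \<notin> H" and z_z: "z \<circ> z = id"
    and z_central: "g \<in> G \<Longrightarrow> z \<circ> g = g \<circ> z"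
    and bij_in: "g \<in> G \<Longrightarrow> bij g"
    and inv_closed: "g \<in> G \<Longrightarrow> Hilbert_Choice.inv g \<in> G"
    and finite: "finite G"
begin

lemma id_in_H: "id \<in> H"
  using comp_in_H_iff[OF z_in z_in] z_z z_notin by simp

lemma comp_z_in_H_iff: "g \<in> G \<Longrightarrow> g \<circ> z \<in> H \<longleftrightarrow> g \<notin> H"
  using comp_in_H_iff[OF _ z_in] z_notin by blast

definition H_part :: "(int \<Rightarrow> int) \<Rightarrow> int \<Rightarrow> int" where
  "H_part g = (if g \<in> H then g else g \<circ> z)"

definition twist :: "complex \<Rightarrow> (int \<Rightarrow> int) \<Rightarrow> complex" where
  "twist e g = (if g \<in> H then 1 else e)"

lemma H_part_in: "g \<in> G \<Longrightarrow> H_part g \<in> H"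
  by (simp add: H_part_def comp_z_in_H_iff)

lemma H_part_comp:
  assumes g: "g \<in> G" and h: "h \<in> G"
  shows "H_part (g \<circ> h) = H_part g \<circ> H_part h"
proof -
  have "g \<circ> z \<circ> h = g \<circ> h \<circ> z" using z_central[OF h] by (simp add: o_assoc[symmetric])
  moreover have "g \<circ> z \<circ> (h \<circ> z) = g \<circ> h \<circ> (z \<circ> z)" using z_central[OF h] by (metis o_assoc)
  ultimately show ?thesis
    using comp_in_H_iff[OF g h] z_z by (auto simp: H_part_def o_assoc)
qed

lemma twist_comp:
  "e * e = 1 \<Longrightarrow> g \<in> G \<Longrightarrow> h \<in> G \<Longrightarrow> twist e (g \<circ> h) = twist e g * twist e h"
  using comp_in_H_iff by (simp add: twist_def)

text \<open>Writing \<open>G = H \<times> {id, z}\<close>, the representation \<open>r\<close> of \<open>H\<close> is extended to \<open>G\<close> by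
  letting \<open>z\<close> act as the scalar \<open>e\<close>.\<close>
definition twisted_rep :: "complex \<Rightarrow> ((int \<Rightarrow> int) \<Rightarrow> complex mat) \<Rightarrow> (int \<Rightarrow> int) \<Rightarrow> complex mat" where
  "twisted_rep e r g = twist e g \<cdot>\<^sub>m r (H_part g)"

definition twisted_char :: "complex \<Rightarrow> ((int \<Rightarrow> int) \<Rightarrow> complex) \<Rightarrow> (int \<Rightarrow> int) \<Rightarrow> complex" where
  "twisted_char e \<chi> g = (if g \<in> G then twist e g * \<chi> (H_part g) else 0)"

lemma twisted_rep_H: "h \<in> H \<Longrightarrow> twisted_rep e r h = r h"
  by (simp add: twisted_rep_def twist_def H_part_def one_smult_mat)

lemma is_rep_twisted_rep:
  assumes rep: "is_rep H d r" and e: "e * e = 1"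
  shows "is_rep G d (twisted_rep e r)"
  unfolding is_rep_def
proof (intro conjI ballI)
  fix g h assume g: "g \<in> G" and h: "h \<in> G"
  show "twisted_rep e r (g \<circ> h) = twisted_rep e r g * twisted_rep e r h"
    unfolding twisted_rep_def H_part_comp[OF g h] twist_comp[OF e g h]
      is_rep_comp[OF rep H_part_in[OF g] H_part_in[OF h]]
    by (rule smult_mult_smult_mat[symmetric])
      (use is_rep_carrier[OF rep] H_part_in g h in blast)+
next
  show "twisted_rep e r id = 1\<^sub>m d" using twisted_rep_H[OF id_in_H] is_rep_id[OF rep] by simp
qed (simp add: twisted_rep_def is_rep_carrier[OF rep] H_part_in)

lemma irreducible_twisted_rep:
  assumes irr: "irreducible_rep H d r" and e: "e * e = 1"
  shows "irreducible_rep G d (twisted_rep e r)"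
proof -
  have rep: "is_rep H d r" using irr by (simp add: irreducible_rep_def)
  have "inv_subspace H d r W" if "inv_subspace G d (twisted_rep e r) W" for W
    using inv_subspace_restrict[OF that subset twisted_rep_H[symmetric]] .
  then show ?thesis using irr is_rep_twisted_rep[OF rep e] by (auto simp: irreducible_rep_def)
qed

lemma rep_eq_twisted_rep:
  assumes rep: "is_rep G d r" and rz: "r z = e \<cdot>\<^sub>m 1\<^sub>m d" and g: "g \<in> G"
  shows "r g = twisted_rep e r g"
proof (cases "g \<in> H")
  case True
  then show ?thesis by (simp add: twisted_rep_H)
next
  case False
  have gz: "g \<circ> z \<in> G" using comp_closed[OF g z_in] .
  have "r g = r (g \<circ> z \<circ> z)" using z_z by (simp add: o_assoc[symmetric])
  also have "\<dots> = r (g \<circ> z) * (e \<cdot>\<^sub>m 1\<^sub>m d)" using is_rep_comp[OF rep gz z_in] rz by simp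
  also have "\<dots> = e \<cdot>\<^sub>m r (g \<circ> z)"
    using mult_smult_distrib[OF is_rep_carrier[OF rep gz] one_carrier_mat] is_rep_carrier[OF rep gz]
    by simp
  finally show ?thesis using False by (simp add: twisted_rep_def twist_def H_part_def)
qed

lemma irreducible_rep_restrict:
  assumes irr: "irreducible_rep G d r"
  shows "irreducible_rep H d r"
proof -
  have rep: "is_rep G d r" using irr by (simp add: irreducible_rep_def)
  obtain e where rz: "r z = e \<cdot>\<^sub>m 1\<^sub>m d"
    using irreducible_rep_central_involution[OF irr z_in z_z z_central] by metis
  have "inv_subspace G d r W" if "inv_subspace H d r W" for W
  proof (rule inv_subspace_scalar_extend[OF that])
    show "r h \<in> carrier_mat d d" if "h \<in> H" for h using is_rep_carrier[OF rep] subset that by blast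
    show "\<exists>c h. h \<in> H \<and> r g = c \<cdot>\<^sub>m r h" if "g \<in> G" for g
      using rep_eq_twisted_rep[OF rep rz that] H_part_in[OF that] unfolding twisted_rep_def by blast
  qed
  then show ?thesis using irr is_rep_subset[OF rep subset] by (auto simp: irreducible_rep_def)
qed

lemma character_twisted_rep:
  assumes "is_rep H d r"
  shows "character G (twisted_rep e r) = twisted_char e (character H r)"
  using mat_trace_smult[OF is_rep_carrier[OF assms H_part_in]]
  by (auto simp: fun_eq_iff character_def twisted_char_def twisted_rep_def H_part_in)

lemma irr_chars_twisted:
  "irr_chars G = (\<lambda>(\<chi>, e). twisted_char e \<chi>) ` (irr_chars H \<times> {1, -1})"
proof (intro equalityI subsetI)
  fix \<psi> assume "\<psi> \<in> irr_chars G"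
  then obtain d r where \<psi>: "\<psi> = character G r" and irr: "irreducible_rep G d r"
    unfolding irr_chars_character by blast
  have rep: "is_rep G d r" using irr by (simp add: irreducible_rep_def)
  obtain e where e: "e = 1 \<or> e = -1" and rz: "r z = e \<cdot>\<^sub>m 1\<^sub>m d"
    using irreducible_rep_central_involution[OF irr z_in z_z z_central] by metis
  have "\<psi> = character G (twisted_rep e r)"
    using rep_eq_twisted_rep[OF rep rz] by (auto simp: \<psi> character_def)
  also have "\<dots> = twisted_char e (character H r)"
    using is_rep_subset[OF rep subset] by (rule character_twisted_rep)
  moreover have "character H r \<in> irr_chars H"
    using irreducible_rep_restrict[OF irr] unfolding irr_chars_character by blast
  ultimately show "\<psi> \<in> (\<lambda>(\<chi>, e). twisted_char e \<chi>) ` (irr_chars H \<times> {1, -1})"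
    using e by (intro rev_image_eqI[of "(character H r, e)"]) auto
next
  fix \<psi> assume "\<psi> \<in> (\<lambda>(\<chi>, e). twisted_char e \<chi>) ` (irr_chars H \<times> {1, -1})"
  then obtain \<chi> e where \<psi>: "\<psi> = twisted_char e \<chi>" and "\<chi> \<in> irr_chars H"
    and e: "e = 1 \<or> e = -1" by auto
  then obtain d r where \<chi>: "\<chi> = character H r" and irr: "irreducible_rep H d r"
    unfolding irr_chars_character by blast
  have "e * e = 1" using e by auto
  then have "irreducible_rep G d (twisted_rep e r)" by (rule irreducible_twisted_rep[OF irr])
  moreover have "is_rep H d r" using irr by (simp add: irreducible_rep_def)
  then have "character G (twisted_rep e r) = twisted_char e (character H r)"
    by (rule character_twisted_rep)
  then have "\<psi> = character G (twisted_rep e r)" using \<psi> \<chi> by simp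
  ultimately show "\<psi> \<in> irr_chars G" unfolding irr_chars_character by blast
qed

lemma inj_on_twisted_char: "inj_on (\<lambda>(\<chi>, e). twisted_char e \<chi>) (irr_chars H \<times> {1, -1})"
proof (rule inj_onI, clarify)
  fix \<chi> e \<chi>' e'
  assume \<chi>: "\<chi> \<in> irr_chars H" and \<chi>': "\<chi>' \<in> irr_chars H"
    and eq: "twisted_char e \<chi> = twisted_char e' \<chi>'"
  have "\<chi> h = \<chi>' h" if "h \<in> H" for h
    using fun_cong[OF eq, of h] that subset by (auto simp: twisted_char_def twist_def H_part_def)
  then have "\<chi> = \<chi>'"
    using irr_chars_outside[OF \<chi>] irr_chars_outside[OF \<chi>'] by (metis ext)
  moreover have at_z: "twisted_char e \<psi> z = e * \<psi> id" for e \<psi>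
    using z_in z_notin z_z by (simp add: twisted_char_def twist_def H_part_def)
  ultimately have "e * \<chi> id = e' * \<chi> id" using fun_cong[OF eq, of z] by (simp only: at_z)
  then show "\<chi> = \<chi>' \<and> e = e'"
    using \<open>\<chi> = \<chi>'\<close> irr_chars_id_nonzero[OF \<chi> id_in_H] by simp
qed

lemma col_sum_double:
  assumes g: "g \<in> G"
  shows "col_sum G g = 2 * col_sum H g"
proof -
  have "col_sum G g = (\<Sum>(\<chi>, e)\<in>irr_chars H \<times> {1, -1}. twisted_char e \<chi> g)"
    unfolding col_sum_def irr_chars_twisted sum.reindex[OF inj_on_twisted_char]
    by (simp add: case_prod_unfold)
  also have "\<dots> = (\<Sum>\<chi>\<in>irr_chars H. \<Sum>e\<in>{1, -1}. twisted_char e \<chi> g)"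
    by (rule sum.cartesian_product[symmetric])
  also have "\<dots> = (\<Sum>\<chi>\<in>irr_chars H. 2 * \<chi> g)"
    using g irr_chars_outside by (intro sum.cong) (auto simp: twisted_char_def twist_def H_part_def)
  finally show ?thesis by (simp add: col_sum_def sum_distrib_left)
qed

lemma conj_in_H_iff:
  assumes h: "h \<in> G" and g: "g \<in> G"
  shows "h \<circ> g \<circ> Hilbert_Choice.inv h \<in> H \<longleftrightarrow> g \<in> H"
proof -
  have ih: "Hilbert_Choice.inv h \<in> G" using inv_closed[OF h] .
  have "h \<circ> Hilbert_Choice.inv h = id"
    by (rule surj_iff[THEN iffD1, OF bij_is_surj[OF bij_in[OF h]]])
  then have "h \<in> H \<longleftrightarrow> Hilbert_Choice.inv h \<in> H" using comp_in_H_iff[OF h ih] id_in_H by simp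
  then show ?thesis using comp_in_H_iff[OF comp_closed[OF h g] ih] comp_in_H_iff[OF h g]
    by (cases "g \<in> H") simp_all
qed

lemma conj_class_eq:
  assumes g: "g \<in> G"
  shows "conj_class G g = conj_class H g"
proof (intro equalityI subsetI)
  fix c assume "c \<in> conj_class G g"
  then obtain h where h: "h \<in> G" and c: "c = h \<circ> g \<circ> Hilbert_Choice.inv h"
    unfolding conj_class_def by blast
  show "c \<in> conj_class H g"
  proof (cases "h \<in> H")
    case True
    then show ?thesis using c unfolding conj_class_def by blast
  next
    case False
    have "Hilbert_Choice.inv z = z" using inv_unique_comp[OF z_z z_z] .
    then have "Hilbert_Choice.inv (h \<circ> z) = z \<circ> Hilbert_Choice.inv h"
      using o_inv_distrib[OF bij_in[OF h] bij_in[OF z_in]] by simp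
    then have "h \<circ> z \<circ> g \<circ> Hilbert_Choice.inv (h \<circ> z) = h \<circ> (z \<circ> g \<circ> z) \<circ> Hilbert_Choice.inv h"
      by (simp add: o_assoc)
    moreover have "z \<circ> g \<circ> z = g"
      using fun_cong[OF z_central[OF g]] fun_cong[OF z_z] by (simp add: fun_eq_iff)
    ultimately have "h \<circ> z \<circ> g \<circ> Hilbert_Choice.inv (h \<circ> z) = c" using c by (simp only:)
    moreover have "h \<circ> z \<in> H" using comp_z_in_H_iff[OF h] False by blast
    ultimately show ?thesis unfolding conj_class_def by blast
  qed
next
  fix c assume "c \<in> conj_class H g"
  then show "c \<in> conj_class G g" using subset unfolding conj_class_def by blast
qed

lemma table_sum_double: "table_sum G = 2 * table_sum H"
proof -
  let ?f = "\<lambda>C. col_sum H (SOME g. g \<in> C)"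
  have self_in: "g \<in> conj_class G g" if "g \<in> G" for g
    using that subset id_in_H by (force simp: conj_class_def)
  have some_in: "(SOME c. c \<in> conj_class G g) \<in> conj_class G g" if "g \<in> G" for g
    using self_in[OF that] by (rule someI[where P = "\<lambda>c. c \<in> conj_class G g"])
  have conj_class_subset: "conj_class G g \<subseteq> G" if "g \<in> G" for g
    using that comp_closed inv_closed by (auto simp: conj_class_def)
  have "table_sum G = (\<Sum>C\<in>conj_classes G. 2 * ?f C)"
    unfolding table_sum_def conj_classes_eq_image
    using some_in conj_class_subset by (intro sum.cong refl col_sum_double) blast
  also have "\<dots> = 2 * (\<Sum>C\<in>conj_classes G. ?f C)" by (simp add: sum_distrib_left)
  \<comment> \<open>The classes of \<open>H\<close> are the classes of \<open>G\<close> inside \<open>H\<close>, with the same chosen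
    representatives; the remaining classes lie outside \<open>H\<close>, where \<open>col_sum H\<close> vanishes.\<close>
  also have "(\<Sum>C\<in>conj_classes G. ?f C) = (\<Sum>C\<in>conj_classes H. ?f C)"
  proof (rule sum.mono_neutral_right)
    show "finite (conj_classes G)" using finite by (simp add: conj_classes_eq_image)
    show "conj_classes H \<subseteq> conj_classes G"
      using conj_class_eq subset by (auto simp: conj_classes_eq_image)
    show "\<forall>C\<in>conj_classes G - conj_classes H. ?f C = 0"
    proof
      fix C assume C: "C \<in> conj_classes G - conj_classes H"
      then obtain g where g: "g \<in> G" and Cg: "C = conj_class G g"
        by (auto simp: conj_classes_eq_image)
      have "g \<notin> H" using C Cg conj_class_eq[OF g] by (auto simp: conj_classes_eq_image)
      moreover obtain h where "h \<in> G" "(SOME c. c \<in> C) = h \<circ> g \<circ> Hilbert_Choice.inv h"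
        using some_in[OF g] Cg by (auto simp: conj_class_def)
      ultimately have "(SOME c. c \<in> C) \<notin> H" using conj_in_H_iff g by simp
      then show "?f C = 0" by (rule col_sum_outside)
    qed
  qed
  finally show ?thesis by (simp add: table_sum_def)
qed

end

lemma signed_perms_central_involution_split:
  assumes "odd n"
  shows "central_involution_split (signed_perms n) (even_signed_perms n) (neg_id n)"
  by unfold_locales
    (simp_all add: even_signed_perms_subset comp_signed_perms comp_even_signed_perms_iff
      neg_id_signed_perms neg_id_not_even_signed_perms[OF assms] neg_id_neg_id neg_id_commute
      signed_perms_bij inv_signed_perms finite_signed_perms)

theorem proposition5p12:
  fixes n :: nat
  assumes "odd n"
  shows "(\<forall>w\<in>signed_perms n.
            col_sum (signed_perms n) w =
              (if even (num_neg_cycles n w) then 2 * col_sum (even_signed_perms n) w else 0))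
         \<and> table_sum (signed_perms n) = 2 * table_sum (even_signed_perms n)"
proof -
  interpret central_involution_split "signed_perms n" "even_signed_perms n" "neg_id n"
    using signed_perms_central_involution_split[OF assms] .
  have "col_sum (signed_perms n) w =
          (if even (num_neg_cycles n w) then 2 * col_sum (even_signed_perms n) w else 0)"
    if w: "w \<in> signed_perms n" for w
    using col_sum_double[OF w] col_sum_outside[of w "even_signed_perms n"]
      even_signed_perms_iff_even_num_neg_cycles[OF w] by simp
  then show ?thesis using table_sum_double by blast
qed

end
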